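(* Let $(G,M,\Delta)$ be a Garside structure and let $(H,N,\delta)$ be a parabolic substructure of it, with $H\neq\{1\}$. Let $T$ be the set of $(H,N)$-reduced elements of $G$. Then $T$ is a right transversal of $H$ in $G$, i.e. for every right coset $C=H\alpha$ ($\alpha\in G$) the set $C\cap T$ consists of exactly one element.
   Context: Let $G$ be a group and $M$ a submonoid with $M\cap M^{-1}=\{1\}$. Define partial orders on $G$ by $\alpha\le_L\beta$ iff $\alpha^{-1}\beta\in M$, and $\alpha\le_R\beta$ iff $\beta\alpha^{-1}\in M$. For $a\in M$ let $\mathrm{Div}_L(a)=\{b\in M: b\le_L a\}$, $\mathrm{Div}_R(a)=\{b\in M: b\le_R a\}$; $a$ is balanced if these coincide, and then $\mathrm{Div}(a)$ denotes this set. $M$ is Noetherian if each $a\in M$ admits an integer $n$ such that $a$ is not a product of more than $n$ non-trivial factors. A Garside structure $(G,M,\Delta)$ consists of such $G,M$ and a balanced $\Delta\in M$ such that: $M$ is Noetherian; $\mathrm{Div}(\Delta)$ is finite and generates $M$ as a monoid and $G$ as a group; $(G,\le_L)$ is a lattice (with meet $\wedge_L$, join $\vee_L$). A parabolic substructure is a triple $(H,N,\delta)$ where $\delta\in M$ is balanced, $H$ (resp. $N$) is the subgroup of $G$ (resp. submonoid of $M$) generated by $\mathrm{Div}(\delta)$, and $\mathrm{Div}(\delta)=\mathrm{Div}(\Delta)\cap N$. Put $\omega=\delta^{-1}\Delta\in M$. An element $a\in M$ is unmovable if $\Delta\not\le_L a$. Every $\alpha\in G$ has a unique right $\Delta$-form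 $\alpha=a\Delta^p$ with $a\in M$ unmovable and $p\in\mathbb Z$. An element $a\in M$ is $N$-reduced if $a\wedge_L\delta=1$ (equivalently, the only $b\in N$ with $b\le_L a$ is $b=1$). An element $\alpha\in G$ with right $\Delta$-form $a\Delta^p$ is $(H,N)$-reduced if $a$ is $N$-reduced and either $p=0$, or $p<0$ and $\omega\not\le_L a$. *)

theory Defs
  imports "HOL-Algebra.Algebra"
begin

definition leL :: "('a, 'b) monoid_scheme \<Rightarrow> 'a set \<Rightarrow> 'a \<Rightarrow> 'a \<Rightarrow> bool" where
  "leL G M x y \<longleftrightarrow> inv\<^bsub>G\<^esub> x \<otimes>\<^bsub>G\<^esub> y \<in> M"

definition leR :: "('a, 'b) monoid_scheme \<Rightarrow> 'a set \<Rightarrow> 'a \<Rightarrow> 'a \<Rightarrow> bool" where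
  "leR G M x y \<longleftrightarrow> y \<otimes>\<^bsub>G\<^esub> inv\<^bsub>G\<^esub> x \<in> M"

definition DivL :: "('a, 'b) monoid_scheme \<Rightarrow> 'a set \<Rightarrow> 'a \<Rightarrow> 'a set" where
  "DivL G M a = {b \<in> M. leL G M b a}"

definition DivR :: "('a, 'b) monoid_scheme \<Rightarrow> 'a set \<Rightarrow> 'a \<Rightarrow> 'a set" where
  "DivR G M a = {b \<in> M. leR G M b a}"

definition balanced :: "('a, 'b) monoid_scheme \<Rightarrow> 'a set \<Rightarrow> 'a \<Rightarrow> bool" where
  "balanced G M a \<longleftrightarrow> a \<in> M \<and> DivL G M a = DivR G M a"

text \<open>Div(a), used only for balanced a.\<close>
definition Div :: "('a, 'b) monoid_scheme \<Rightarrow> 'a set \<Rightarrow> 'a \<Rightarrow> 'a set" where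
  "Div G M a = DivL G M a"

definition lprod :: "('a, 'b) monoid_scheme \<Rightarrow> 'a list \<Rightarrow> 'a" where
  "lprod G xs = foldr (\<lambda>x y. x \<otimes>\<^bsub>G\<^esub> y) xs \<one>\<^bsub>G\<^esub>"

definition monoid_gen :: "('a, 'b) monoid_scheme \<Rightarrow> 'a set \<Rightarrow> 'a set" where
  "monoid_gen G S = {lprod G xs | xs. set xs \<subseteq> S}"

definition submonoid_of :: "('a, 'b) monoid_scheme \<Rightarrow> 'a set \<Rightarrow> bool" where
  "submonoid_of G M \<longleftrightarrow> M \<subseteq> carrier G \<and> \<one>\<^bsub>G\<^esub> \<in> M \<and>
     (\<forall>x\<in>M. \<forall>y\<in>M. x \<otimes>\<^bsub>G\<^esub> y \<in> M)"

definition noetherian :: "('a, 'b) monoid_scheme \<Rightarrow> 'a set \<Rightarrow> bool" where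
  "noetherian G M \<longleftrightarrow> (\<forall>a\<in>M. \<exists>n::nat. \<forall>xs. set xs \<subseteq> M - {\<one>\<^bsub>G\<^esub>} \<and> lprod G xs = a
        \<longrightarrow> length xs \<le> n)"

definition is_glbL :: "('a, 'b) monoid_scheme \<Rightarrow> 'a set \<Rightarrow> 'a \<Rightarrow> 'a \<Rightarrow> 'a \<Rightarrow> bool" where
  "is_glbL G M c x y \<longleftrightarrow> c \<in> carrier G \<and> leL G M c x \<and> leL G M c y \<and>
     (\<forall>d\<in>carrier G. leL G M d x \<and> leL G M d y \<longrightarrow> leL G M d c)"

definition is_lubL :: "('a, 'b) monoid_scheme \<Rightarrow> 'a set \<Rightarrow> 'a \<Rightarrow> 'a \<Rightarrow> 'a \<Rightarrow> bool" where
  "is_lubL G M c x y \<longleftrightarrow> c \<in> carrier G \<and> leL G M x c \<and> leL G M y c \<and>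
     (\<forall>d\<in>carrier G. leL G M x d \<and> leL G M y d \<longrightarrow> leL G M c d)"

definition meetL :: "('a, 'b) monoid_scheme \<Rightarrow> 'a set \<Rightarrow> 'a \<Rightarrow> 'a \<Rightarrow> 'a" where
  "meetL G M x y = (THE c. is_glbL G M c x y)"

definition lattice_L :: "('a, 'b) monoid_scheme \<Rightarrow> 'a set \<Rightarrow> bool" where
  "lattice_L G M \<longleftrightarrow> (\<forall>x\<in>carrier G. \<forall>y\<in>carrier G.
      (\<exists>c. is_glbL G M c x y) \<and> (\<exists>c. is_lubL G M c x y))"

definition garside_structure :: "('a, 'b) monoid_scheme \<Rightarrow> 'a set \<Rightarrow> 'a \<Rightarrow> bool" where
  "garside_structure G M \<Delta> \<longleftrightarrow>
     group G \<and> submonoid_of G M \<and> M \<inter> (\<lambda>x. inv\<^bsub>G\<^esub> x) ` M = {\<one>\<^bsub>G\<^esub>} \<and>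
     balanced G M \<Delta> \<and> noetherian G M \<and>
     finite (Div G M \<Delta>) \<and> monoid_gen G (Div G M \<Delta>) = M \<and>
     generate G (Div G M \<Delta>) = carrier G \<and>
     lattice_L G M"

definition parabolic_substructure ::
  "('a, 'b) monoid_scheme \<Rightarrow> 'a set \<Rightarrow> 'a \<Rightarrow> 'a set \<Rightarrow> 'a set \<Rightarrow> 'a \<Rightarrow> bool" where
  "parabolic_substructure G M \<Delta> H N \<delta> \<longleftrightarrow>
     balanced G M \<delta> \<and> H = generate G (Div G M \<delta>) \<and> N = monoid_gen G (Div G M \<delta>) \<and>
     Div G M \<delta> = Div G M \<Delta> \<inter> N"

definition unmovable :: "('a, 'b) monoid_scheme \<Rightarrow> 'a set \<Rightarrow> 'a \<Rightarrow> 'a \<Rightarrow> bool" where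
  "unmovable G M \<Delta> a \<longleftrightarrow> a \<in> M \<and> \<not> leL G M \<Delta> a"

definition N_reduced :: "('a, 'b) monoid_scheme \<Rightarrow> 'a set \<Rightarrow> 'a \<Rightarrow> 'a \<Rightarrow> bool" where
  "N_reduced G M \<delta> a \<longleftrightarrow> a \<in> M \<and> meetL G M a \<delta> = \<one>\<^bsub>G\<^esub>"

text \<open>alpha is (H,N)-reduced: its right Delta-form a Delta^p (unique by the context)
  satisfies the conditions.\<close>
definition HN_reduced :: "('a, 'b) monoid_scheme \<Rightarrow> 'a set \<Rightarrow> 'a \<Rightarrow> 'a \<Rightarrow> 'a \<Rightarrow> bool" where
  "HN_reduced G M \<Delta> \<delta> \<alpha> \<longleftrightarrow>
     (\<exists>a (p::int). \<alpha> = a \<otimes>\<^bsub>G\<^esub> (\<Delta> [^]\<^bsub>G\<^esub> p) \<and> unmovable G M \<Delta> a \<and>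
        N_reduced G M \<delta> a \<and>
        (p = 0 \<or> (p < 0 \<and> \<not> leL G M (inv\<^bsub>G\<^esub> \<delta> \<otimes>\<^bsub>G\<^esub> \<Delta>) a)))"

end

(* Every element of H has the form inv (\<delta>^k) n with n \<in> N, and N is closed under left divisors
   in M: the \<Delta>-meet of an element of N divides \<delta>, so an element of N can be peeled off one simple
   element at a time.  For an N-reduced a this gives two cancellation laws: an element of N dividing
   m a (m \<in> N) already divides m, and \<omega> = inv \<delta> \<Delta> dividing n a (n \<in> N) already divides a.

   Existence: take the least j such that some h \<alpha> \<Delta>^j (h \<in> H) lies in M and split off its N-part,
   h \<alpha> \<Delta>^j = n a with a N-reduced; a is then unmovable since \<delta> \<noteq> 1, and the minimality of j
   excludes \<omega> \<preceq> a.  Uniqueness: if a \<Delta>^p and a' \<Delta>^p' with p < p' lie in one coset, then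
   h a inv \<Delta> \<in> M for some h \<in> H, which the cancellation laws forbid when \<omega> does not divide a;
   if p = p', then a' = h a forces h = 1. *)

theory Submission
  imports Defs
begin

lemma lprod_Nil [simp]: "lprod G [] = \<one>\<^bsub>G\<^esub>"
  by (simp add: lprod_def)

lemma lprod_Cons [simp]: "lprod G (x # xs) = x \<otimes>\<^bsub>G\<^esub> lprod G xs"
  by (simp add: lprod_def)

lemma one_in_monoid_gen: "\<one>\<^bsub>G\<^esub> \<in> monoid_gen G S"
  unfolding monoid_gen_def by (intro CollectI exI [of _ "[]"]) simp

lemma monoid_gen_Cons:
  assumes "s \<in> S" "x \<in> monoid_gen G S"
  shows "s \<otimes>\<^bsub>G\<^esub> x \<in> monoid_gen G S"
proof -
  obtain xs where "set xs \<subseteq> S" "x = lprod G xs"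
    using assms(2) by (auto simp: monoid_gen_def)
  then show ?thesis
    using assms(1) unfolding monoid_gen_def by (auto intro!: exI[of _ "s # xs"])
qed

lemma monoid_gen_induct [consumes 1, case_names one Cons]:
  assumes "x \<in> monoid_gen G S"
    and "P \<one>\<^bsub>G\<^esub>"
    and "\<And>s y. s \<in> S \<Longrightarrow> y \<in> monoid_gen G S \<Longrightarrow> P y \<Longrightarrow> P (s \<otimes>\<^bsub>G\<^esub> y)"
  shows "P x"
proof -
  obtain xs where xs: "set xs \<subseteq> S" "x = lprod G xs"
    using assms(1) by (auto simp: monoid_gen_def)
  have "lprod G xs \<in> monoid_gen G S \<and> P (lprod G xs)"
    using xs(1) by (induct xs) (auto simp: assms(2,3) one_in_monoid_gen monoid_gen_Cons)
  then show ?thesis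
    using xs(2) by simp
qed

context group
begin

lemma mult_inv_cancel_left [simp]: "x \<in> carrier G \<Longrightarrow> z \<in> carrier G \<Longrightarrow> x \<otimes> (inv x \<otimes> z) = z"
  by (simp add: m_assoc [symmetric])

lemma inv_mult_cancel_left [simp]: "x \<in> carrier G \<Longrightarrow> z \<in> carrier G \<Longrightarrow> inv x \<otimes> (x \<otimes> z) = z"
  by (simp add: m_assoc [symmetric])

context
  fixes S :: "'a set"
  assumes S_carrier: "S \<subseteq> carrier G"
begin

lemma monoid_gen_carrier: "x \<in> monoid_gen G S \<Longrightarrow> x \<in> carrier G"
  by (induct rule: monoid_gen_induct) (use S_carrier in auto)

lemma generator_in_monoid_gen: "s \<in> S \<Longrightarrow> s \<in> monoid_gen G S"
  using monoid_gen_Cons [OF _ one_in_monoid_gen, of s S G] S_carrier by auto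

lemma monoid_gen_mult: "x \<in> monoid_gen G S \<Longrightarrow> y \<in> monoid_gen G S \<Longrightarrow> x \<otimes> y \<in> monoid_gen G S"
proof (induct rule: monoid_gen_induct)
  case one
  then show ?case using monoid_gen_carrier by simp
next
  case (Cons s x)
  then show ?case
    using S_carrier monoid_gen_carrier by (simp add: m_assoc monoid_gen_Cons subset_iff)
qed

lemma monoid_gen_subset_generate: "monoid_gen G S \<subseteq> generate G S"
proof
  fix x
  assume "x \<in> monoid_gen G S"
  then show "x \<in> generate G S"
    by (induct rule: monoid_gen_induct) (auto intro: generate.one generate.incl generate.eng)
qed

lemma monoid_gen_conj:
  assumes "c \<in> carrier G" "\<And>s. s \<in> S \<Longrightarrow> c \<otimes> s \<otimes> inv c \<in> S" "x \<in> monoid_gen G S"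
  shows "c \<otimes> x \<otimes> inv c \<in> monoid_gen G S"
  using assms(3)
proof (induct rule: monoid_gen_induct)
  case one
  then show ?case using assms(1) one_in_monoid_gen by simp
next
  case (Cons s y)
  have "c \<otimes> (s \<otimes> y) \<otimes> inv c = (c \<otimes> s \<otimes> inv c) \<otimes> (c \<otimes> y \<otimes> inv c)"
    using Cons(1,2) assms(1) S_carrier monoid_gen_carrier by (auto simp: m_assoc)
  then show ?case
    using Cons assms(2) by (simp add: monoid_gen_Cons)
qed

lemma monoid_gen_conj_pow:
  assumes "c \<in> carrier G" "\<And>s. s \<in> S \<Longrightarrow> c \<otimes> s \<otimes> inv c \<in> S"
  shows "x \<in> monoid_gen G S \<Longrightarrow> c [^] (k::nat) \<otimes> x \<otimes> inv (c [^] k) \<in> monoid_gen G S"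
proof (induct k arbitrary: x)
  case 0
  then show ?case using monoid_gen_carrier by simp
next
  case (Suc k)
  have "c [^] Suc k \<otimes> x \<otimes> inv (c [^] Suc k) = c [^] k \<otimes> (c \<otimes> x \<otimes> inv c) \<otimes> inv (c [^] k)"
    using assms(1) Suc(2) monoid_gen_carrier by (simp add: m_assoc inv_mult_group)
  then show ?case
    using Suc(1) monoid_gen_conj [OF assms Suc(2)] by simp
qed

end

end

locale positive_submonoid = group G for G (structure) +
  fixes M :: "'a set"
  assumes submonoid: "submonoid_of G M"
    and units_trivial: "M \<inter> (\<lambda>x. inv x) ` M = {\<one>}"
begin

abbreviation leq :: "'a \<Rightarrow> 'a \<Rightarrow> bool" (infix "\<preceq>" 50)
  where "x \<preceq> y \<equiv> leL G M x y"

lemma M_carrier [simp]: "x \<in> M \<Longrightarrow> x \<in> carrier G"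
  using submonoid by (auto simp: submonoid_of_def)

lemma one_in_M [simp]: "\<one> \<in> M"
  using submonoid by (simp add: submonoid_of_def)

lemma M_mult_closed [simp]: "x \<in> M \<Longrightarrow> y \<in> M \<Longrightarrow> x \<otimes> y \<in> M"
  using submonoid by (simp add: submonoid_of_def)

lemma M_inv_in_M_eq_one:
  assumes "x \<in> M" "inv x \<in> M"
  shows "x = \<one>"
proof -
  have "x \<in> (\<lambda>x. inv x) ` M"
    using assms by (intro image_eqI [of _ _ "inv x"]) simp_all
  then show ?thesis
    using assms(1) units_trivial by blast
qed

lemma leL_refl [simp]: "x \<in> carrier G \<Longrightarrow> x \<preceq> x"
  by (simp add: leL_def)

lemma leL_trans:
  assumes "x \<in> carrier G" "y \<in> carrier G" "z \<in> carrier G" "x \<preceq> y" "y \<preceq> z"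
  shows "x \<preceq> z"
proof -
  have "inv x \<otimes> z = (inv x \<otimes> y) \<otimes> (inv y \<otimes> z)"
    using assms(1-3) by (simp add: m_assoc)
  then show ?thesis
    using assms(4,5) by (simp add: leL_def)
qed

lemma leL_antisym:
  assumes "x \<in> carrier G" "y \<in> carrier G" "x \<preceq> y" "y \<preceq> x"
  shows "x = y"
proof -
  have "inv (inv x \<otimes> y) = inv y \<otimes> x"
    using assms(1,2) by (simp add: inv_mult_group)
  then have "inv x \<otimes> y = \<one>"
    using assms(3,4) M_inv_in_M_eq_one by (simp add: leL_def)
  then have "x \<otimes> (inv x \<otimes> y) = x"
    using assms(1) by simp
  then show ?thesis
    using assms(1,2) by simp
qed

lemma leL_mult_left_iff:
  "g \<in> carrier G \<Longrightarrow> x \<in> carrier G \<Longrightarrow> y \<in> carrier G \<Longrightarrow> g \<otimes> x \<preceq> g \<otimes> y \<longleftrightarrow> x \<preceq> y"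
  by (simp add: leL_def inv_mult_group m_assoc)

lemma one_leL_iff [simp]: "x \<in> carrier G \<Longrightarrow> \<one> \<preceq> x \<longleftrightarrow> x \<in> M"
  by (simp add: leL_def)

lemma leL_mult_right: "x \<in> carrier G \<Longrightarrow> m \<in> M \<Longrightarrow> x \<preceq> x \<otimes> m"
  by (simp add: leL_def m_assoc [symmetric])

lemma leL_one_eq_one: "x \<in> M \<Longrightarrow> x \<preceq> \<one> \<Longrightarrow> x = \<one>"
  using leL_antisym [of x \<one>] by simp

lemma leL_M_closed: "x \<in> M \<Longrightarrow> y \<in> carrier G \<Longrightarrow> x \<preceq> y \<Longrightarrow> y \<in> M"
  using leL_trans [of \<one> x y] by simp

lemma leL_quotient_in_M: "x \<preceq> y \<Longrightarrow> inv x \<otimes> y \<in> M"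
  by (simp add: leL_def)

lemma mem_Div_iff: "s \<in> Div G M a \<longleftrightarrow> s \<in> M \<and> s \<preceq> a"
  by (simp add: Div_def DivL_def)

lemma Div_carrier [simp]: "s \<in> Div G M a \<Longrightarrow> s \<in> carrier G"
  by (simp add: mem_Div_iff)

lemma Div_subset_carrier: "Div G M a \<subseteq> carrier G"
  by auto

context
  fixes a
  assumes balanced: "balanced G M a"
begin

lemma balanced_in_M [simp]: "a \<in> M"
  using balanced by (simp add: balanced_def)

lemma self_in_Div: "a \<in> Div G M a"
  by (simp add: mem_Div_iff)

lemma Div_right_quotient_in_M: "s \<in> Div G M a \<Longrightarrow> a \<otimes> inv s \<in> M"
  using balanced by (auto simp: balanced_def Div_def DivR_def leR_def)

lemma Div_if_right_quotient_in_M: "s \<in> M \<Longrightarrow> a \<otimes> inv s \<in> M \<Longrightarrow> s \<in> Div G M a"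
  using balanced by (auto simp: balanced_def Div_def DivR_def leR_def)

lemma Div_left_complement:
  assumes "s \<in> Div G M a"
  shows "inv s \<otimes> a \<in> Div G M a"
proof (rule Div_if_right_quotient_in_M)
  show "inv s \<otimes> a \<in> M"
    using assms by (simp add: mem_Div_iff leL_def)
  show "a \<otimes> inv (inv s \<otimes> a) \<in> M"
    using assms by (simp add: mem_Div_iff inv_mult_group m_assoc [symmetric])
qed

lemma Div_right_complement:
  assumes "s \<in> Div G M a"
  shows "a \<otimes> inv s \<in> Div G M a"
proof -
  have "inv (a \<otimes> inv s) \<otimes> a = s"
    using assms by (simp add: inv_mult_group m_assoc)
  then show ?thesis
    using assms Div_right_quotient_in_M by (simp add: mem_Div_iff leL_def)
qed

lemma Div_conj_inv:
  assumes "s \<in> Div G M a"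
  shows "inv a \<otimes> s \<otimes> a \<in> Div G M a"
proof -
  have "inv (inv s \<otimes> a) \<otimes> a = inv a \<otimes> s \<otimes> a"
    using assms by (simp add: inv_mult_group m_assoc)
  then show ?thesis
    using Div_left_complement [OF Div_left_complement [OF assms]] by simp
qed

lemma Div_conj:
  assumes "s \<in> Div G M a"
  shows "a \<otimes> s \<otimes> inv a \<in> Div G M a"
proof -
  have "a \<otimes> inv (a \<otimes> inv s) = a \<otimes> s \<otimes> inv a"
    using assms by (simp add: inv_mult_group m_assoc)
  then show ?thesis
    using Div_right_complement [OF Div_right_complement [OF assms]] by simp
qed

lemma Div_conj_inv_pow: "s \<in> Div G M a \<Longrightarrow> inv (a [^] (k::nat)) \<otimes> s \<otimes> a [^] k \<in> Div G M a"
proof (induct k)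
  case 0
  then show ?case by simp
next
  case (Suc k)
  have "inv (a [^] Suc k) \<otimes> s \<otimes> a [^] Suc k = inv a \<otimes> (inv (a [^] k) \<otimes> s \<otimes> a [^] k) \<otimes> a"
    using Suc(2) by (simp add: m_assoc inv_mult_group)
  then show ?case
    using Div_conj_inv [OF Suc(1) [OF Suc(2)]] by simp
qed

lemma Div_right_factor:
  assumes "x \<in> M" "y \<in> M" "x \<otimes> y \<in> Div G M a"
  shows "y \<in> Div G M a"
proof -
  have "x \<in> Div G M a"
    using assms leL_mult_right [of x y] leL_trans [of x "x \<otimes> y" a] by (simp add: mem_Div_iff)
  then have "inv x \<otimes> a \<in> Div G M a"
    by (rule Div_left_complement)
  moreover have "y \<preceq> inv x \<otimes> a"
    using assms leL_mult_left_iff [of x y "inv x \<otimes> a"] by (simp add: mem_Div_iff)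
  ultimately show ?thesis
    using assms(2) leL_trans [of y "inv x \<otimes> a" a] by (simp add: mem_Div_iff)
qed

lemma Div_left_quotient:
  assumes "s \<in> M" "v \<in> Div G M a" "s \<preceq> v"
  shows "inv s \<otimes> v \<in> Div G M a"
proof (rule Div_right_factor [of s])
  show "inv s \<otimes> v \<in> M"
    using assms(3) by (rule leL_quotient_in_M)
  show "s \<otimes> (inv s \<otimes> v) \<in> Div G M a"
    using assms(1,2) by simp
qed (rule assms(1))

lemma monoid_gen_Div_subset_M: "monoid_gen G (Div G M a) \<subseteq> M"
proof
  fix x
  assume "x \<in> monoid_gen G (Div G M a)"
  then show "x \<in> M"
    by (induct rule: monoid_gen_induct) (auto simp: mem_Div_iff)
qed

lemma monoid_gen_Div_carrier [simp]: "x \<in> monoid_gen G (Div G M a) \<Longrightarrow> x \<in> carrier G"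
  using monoid_gen_Div_subset_M by auto

lemma pow_in_monoid_gen_Div: "a [^] (k::nat) \<in> monoid_gen G (Div G M a)"
proof (induct k)
  case 0
  then show ?case by (simp add: one_in_monoid_gen)
next
  case (Suc k)
  then show ?case
    using monoid_gen_mult [OF Div_subset_carrier Suc generator_in_monoid_gen [OF Div_subset_carrier self_in_Div]]
    by simp
qed

lemma monoid_gen_Div_conj_pow:
  "x \<in> monoid_gen G (Div G M a) \<Longrightarrow> a [^] (k::nat) \<otimes> x \<otimes> inv (a [^] k) \<in> monoid_gen G (Div G M a)"
  by (rule monoid_gen_conj_pow [OF Div_subset_carrier]) (auto intro: Div_conj)

lemma monoid_gen_Div_conj_inv_pow:
  "x \<in> monoid_gen G (Div G M a) \<Longrightarrow> inv (a [^] (k::nat)) \<otimes> x \<otimes> a [^] k \<in> monoid_gen G (Div G M a)"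
  using monoid_gen_conj_pow [OF Div_subset_carrier, where c = "inv a" and k = k] Div_conj_inv
  by (simp add: nat_pow_inv)

lemma generate_Div_eq_inv_pow_mult:
  "h \<in> generate G (Div G M a) \<Longrightarrow> \<exists>k::nat. \<exists>n \<in> monoid_gen G (Div G M a). h = inv (a [^] k) \<otimes> n"
proof (induct rule: generate.induct)
  case one
  have "\<one> = inv (a [^] (0::nat)) \<otimes> \<one>"
    by simp
  then show ?case
    using one_in_monoid_gen by blast
next
  case (incl s)
  then have "s = inv (a [^] (0::nat)) \<otimes> s"
    by simp
  then show ?case
    using generator_in_monoid_gen [OF Div_subset_carrier incl] by blast
next
  case (inv s)
  have "inv s = inv (a [^] (1::nat)) \<otimes> (a \<otimes> inv s)"
    using inv by (simp add: m_assoc [symmetric])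
  then show ?case
    using generator_in_monoid_gen [OF Div_subset_carrier Div_right_complement [OF inv]] by blast
next
  case (eng h1 h2)
  then obtain k1 k2 :: nat and n1 n2
    where n: "n1 \<in> monoid_gen G (Div G M a)" "h1 = inv (a [^] k1) \<otimes> n1"
      "n2 \<in> monoid_gen G (Div G M a)" "h2 = inv (a [^] k2) \<otimes> n2"
    by blast
  have "a [^] (k2 + k1) = a [^] k2 \<otimes> a [^] k1"
    by (simp add: nat_pow_mult)
  then have "h1 \<otimes> h2 = inv (a [^] (k2 + k1)) \<otimes> ((a [^] k2 \<otimes> n1 \<otimes> inv (a [^] k2)) \<otimes> n2)"
    using n by (simp add: m_assoc inv_mult_group)
  moreover have "(a [^] k2 \<otimes> n1 \<otimes> inv (a [^] k2)) \<otimes> n2 \<in> monoid_gen G (Div G M a)"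
    using n monoid_gen_mult [OF Div_subset_carrier] monoid_gen_Div_conj_pow by blast
  ultimately show ?case
    by blast
qed

end

end

locale garside = positive_submonoid +
  fixes \<Delta> :: 'a
  assumes Delta_balanced: "balanced G M \<Delta>"
    and noetherian: "noetherian G M"
    and Div_Delta_generates_M: "monoid_gen G (Div G M \<Delta>) = M"
    and Div_Delta_generates_G: "generate G (Div G M \<Delta>) = carrier G"
    and lattice: "lattice_L G M"
begin

lemma Delta_in_M [simp]: "\<Delta> \<in> M"
  using Delta_balanced by (rule balanced_in_M)

lemma Delta_pow_in_M [simp]: "\<Delta> [^] (k::nat) \<in> M"
  using pow_in_monoid_gen_Div [OF Delta_balanced] Div_Delta_generates_M by simp

lemma Delta_pow_conj_inv: "m \<in> M \<Longrightarrow> inv (\<Delta> [^] (k::nat)) \<otimes> m \<otimes> \<Delta> [^] k \<in> M"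
  using monoid_gen_Div_conj_inv_pow [OF Delta_balanced] Div_Delta_generates_M by simp

lemma Delta_conj_inv: "m \<in> M \<Longrightarrow> inv \<Delta> \<otimes> m \<otimes> \<Delta> \<in> M"
  using Delta_pow_conj_inv [of m 1] by simp

lemma Delta_conj: "m \<in> M \<Longrightarrow> \<Delta> \<otimes> m \<otimes> inv \<Delta> \<in> M"
  using monoid_gen_Div_conj_pow [OF Delta_balanced, of m 1] Div_Delta_generates_M by simp

lemma carrier_eq_inv_Delta_pow_mult: "x \<in> carrier G \<Longrightarrow> \<exists>k::nat. \<exists>m \<in> M. x = inv (\<Delta> [^] k) \<otimes> m"
  using generate_Div_eq_inv_pow_mult [OF Delta_balanced] Div_Delta_generates_G Div_Delta_generates_M
  by simp

lemma Delta_leL_mult_Delta: "s \<in> M \<Longrightarrow> \<Delta> \<preceq> s \<otimes> \<Delta>"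
  using leL_mult_right [of \<Delta> "inv \<Delta> \<otimes> s \<otimes> \<Delta>"] Delta_conj_inv by (simp add: m_assoc)

abbreviation meet :: "'a \<Rightarrow> 'a \<Rightarrow> 'a"
  where "meet \<equiv> meetL G M"

definition join :: "'a \<Rightarrow> 'a \<Rightarrow> 'a"
  where "join x y = (THE c. is_lubL G M c x y)"

lemma meet_is_glbL:
  assumes "x \<in> carrier G" "y \<in> carrier G"
  shows "is_glbL G M (meet x y) x y"
proof -
  obtain c where c: "is_glbL G M c x y"
    using lattice assms unfolding lattice_L_def by blast
  moreover have "is_glbL G M c' x y \<Longrightarrow> c' = c" for c'
    using c unfolding is_glbL_def by (meson leL_antisym)
  ultimately show ?thesis
    unfolding meetL_def by (rule theI)
qed

lemma join_is_lubL:
  assumes "x \<in> carrier G" "y \<in> carrier G"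
  shows "is_lubL G M (join x y) x y"
proof -
  obtain c where c: "is_lubL G M c x y"
    using lattice assms unfolding lattice_L_def by blast
  moreover have "is_lubL G M c' x y \<Longrightarrow> c' = c" for c'
    using c unfolding is_lubL_def by (meson leL_antisym)
  ultimately show ?thesis
    unfolding join_def by (rule theI)
qed

context
  fixes x y
  assumes carrier: "x \<in> carrier G" "y \<in> carrier G"
begin

lemma meet_closed [simp]: "meet x y \<in> carrier G"
  using meet_is_glbL [OF carrier] by (simp add: is_glbL_def)

lemma meet_leL_left: "meet x y \<preceq> x"
  using meet_is_glbL [OF carrier] by (simp add: is_glbL_def)

lemma meet_leL_right: "meet x y \<preceq> y"
  using meet_is_glbL [OF carrier] by (simp add: is_glbL_def)

lemma meet_greatest: "z \<in> carrier G \<Longrightarrow> z \<preceq> x \<Longrightarrow> z \<preceq> y \<Longrightarrow> z \<preceq> meet x y"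
  using meet_is_glbL [OF carrier] by (simp add: is_glbL_def)

lemma join_closed [simp]: "join x y \<in> carrier G"
  using join_is_lubL [OF carrier] by (simp add: is_lubL_def)

lemma join_geL_left: "x \<preceq> join x y"
  using join_is_lubL [OF carrier] by (simp add: is_lubL_def)

lemma join_geL_right: "y \<preceq> join x y"
  using join_is_lubL [OF carrier] by (simp add: is_lubL_def)

lemma join_least: "z \<in> carrier G \<Longrightarrow> x \<preceq> z \<Longrightarrow> y \<preceq> z \<Longrightarrow> join x y \<preceq> z"
  using join_is_lubL [OF carrier] by (simp add: is_lubL_def)

end

lemma meet_in_M: "x \<in> M \<Longrightarrow> y \<in> M \<Longrightarrow> meet x y \<in> M"
  using meet_greatest [of x y \<one>] by simp

lemma meet_Delta_neq_one:
  assumes "x \<in> M" "x \<noteq> \<one>"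
  shows "meet x \<Delta> \<noteq> \<one>"
proof -
  have "x \<in> monoid_gen G (Div G M \<Delta>)"
    using assms(1) Div_Delta_generates_M by simp
  then show ?thesis
    using assms(2)
  proof (induct rule: monoid_gen_induct)
    case one
    then show ?case by simp
  next
    case (Cons s y)
    have y: "y \<in> M" and s: "s \<in> M" "s \<preceq> \<Delta>"
      using Cons(1,2) Div_Delta_generates_M by (auto simp: mem_Div_iff)
    show ?case
    proof (cases "s = \<one>")
      case True
      then show ?thesis using Cons(3,4) y by simp
    next
      case False
      have "s \<preceq> meet (s \<otimes> y) \<Delta>"
        using s y leL_mult_right [of s y] by (simp add: meet_greatest)
      then show ?thesis
        using False s(1) leL_one_eq_one by auto
    qed
  qed
qed

definition factor_length :: "'a \<Rightarrow> nat"
  where "factor_length a = (GREATEST n. \<exists>xs. set xs \<subseteq> M - {\<one>} \<and> lprod G xs = a \<and> length xs = n)"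

lemma factor_length_less_mult:
  assumes "u \<in> M" "u \<noteq> \<one>" "c \<in> M"
  shows "factor_length c < factor_length (u \<otimes> c)"
proof -
  let ?F = "\<lambda>a n. \<exists>xs. set xs \<subseteq> M - {\<one>} \<and> lprod G xs = a \<and> length xs = n"
  obtain B where B: "\<And>a n. a \<in> M \<Longrightarrow> ?F a n \<Longrightarrow> n \<le> B a"
    using bchoice [OF noetherian [unfolded noetherian_def]] by blast
  have "?F c (if c = \<one> then 0 else 1)"
  proof (cases "c = \<one>")
    case True
    then show ?thesis by (intro exI [of _ "[]"]) simp
  next
    case False
    then show ?thesis using assms(3) by (intro exI [of _ "[c]"]) simp
  qed
  then have "?F c (factor_length c)"
    unfolding factor_length_def by (rule GreatestI_nat [OF _ B [OF assms(3)]])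
  then obtain xs where xs: "set xs \<subseteq> M - {\<one>}" "lprod G xs = c" "length xs = factor_length c"
    by blast
  then have "?F (u \<otimes> c) (Suc (factor_length c))"
    using assms(1,2) by (intro exI [of _ "u # xs"]) simp
  then have "Suc (factor_length c) \<le> factor_length (u \<otimes> c)"
    unfolding factor_length_def by (rule Greatest_le_nat [OF _ B [OF M_mult_closed [OF assms(1,3)]]])
  then show ?thesis
    by simp
qed

lemma left_factor_induct [consumes 1, case_names step]:
  assumes "b \<in> M"
    and "\<And>b. b \<in> M \<Longrightarrow> (\<And>u c. u \<in> M \<Longrightarrow> u \<noteq> \<one> \<Longrightarrow> c \<in> M \<Longrightarrow> b = u \<otimes> c \<Longrightarrow> P c) \<Longrightarrow> P b"
  shows "P b"
  using assms(1)
proof (induct "factor_length b" arbitrary: b rule: less_induct)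
  case less
  show ?case
  proof (rule assms(2) [OF less.prems])
    fix u c
    assume "u \<in> M" "u \<noteq> \<one>" "c \<in> M" "b = u \<otimes> c"
    then show "P c"
      using less.hyps factor_length_less_mult by simp
  qed
qed

end

locale parabolic = garside +
  fixes H N :: "'a set" and \<delta> :: 'a
  assumes delta_balanced: "balanced G M \<delta>"
    and H_def: "H = generate G (Div G M \<delta>)"
    and N_def: "N = monoid_gen G (Div G M \<delta>)"
    and Div_delta: "Div G M \<delta> = Div G M \<Delta> \<inter> N"
begin

abbreviation \<omega> :: 'a
  where "\<omega> \<equiv> inv \<delta> \<otimes> \<Delta>"

lemma delta_in_M [simp]: "\<delta> \<in> M"
  using delta_balanced by (rule balanced_in_M)

lemma N_subset_M: "N \<subseteq> M"
  using monoid_gen_Div_subset_M [OF delta_balanced] N_def by simp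

lemma N_in_M [simp]: "x \<in> N \<Longrightarrow> x \<in> M"
  using N_subset_M by auto

lemma one_in_N [simp]: "\<one> \<in> N"
  by (simp add: N_def one_in_monoid_gen)

lemma N_mult_closed [simp]: "x \<in> N \<Longrightarrow> y \<in> N \<Longrightarrow> x \<otimes> y \<in> N"
  using monoid_gen_mult [OF Div_subset_carrier] N_def by simp

lemma Div_delta_in_N: "s \<in> Div G M \<delta> \<Longrightarrow> s \<in> N"
  using generator_in_monoid_gen [OF Div_subset_carrier] N_def by simp

lemma delta_in_N [simp]: "\<delta> \<in> N"
  using Div_delta_in_N self_in_Div [OF delta_balanced] by simp

lemma delta_pow_in_N [simp]: "\<delta> [^] (k::nat) \<in> N"
  using pow_in_monoid_gen_Div [OF delta_balanced] N_def by simp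

lemma delta_conj: "n \<in> N \<Longrightarrow> \<delta> \<otimes> n \<otimes> inv \<delta> \<in> N"
  using monoid_gen_Div_conj_pow [OF delta_balanced, of n 1] N_def by simp

lemma delta_leL_Delta: "\<delta> \<preceq> \<Delta>"
  using self_in_Div [OF delta_balanced] Div_delta by (simp add: mem_Div_iff)

lemma omega_in_M [simp]: "\<omega> \<in> M"
  using delta_leL_Delta by (rule leL_quotient_in_M)

lemma delta_mult_omega: "\<delta> \<otimes> \<omega> = \<Delta>"
  by (simp add: m_assoc [symmetric])

lemma H_subgroup: "subgroup H G"
  using generate_is_subgroup [OF Div_subset_carrier] H_def by simp

lemma H_carrier [simp]: "h \<in> H \<Longrightarrow> h \<in> carrier G"
  using subgroup.mem_carrier [OF H_subgroup] .

lemma N_subset_H: "N \<subseteq> H"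
  using monoid_gen_subset_generate [OF Div_subset_carrier] N_def H_def by simp

lemma H_eq_inv_delta_pow_mult: "h \<in> H \<Longrightarrow> \<exists>k::nat. \<exists>n \<in> N. h = inv (\<delta> [^] k) \<otimes> n"
  using generate_Div_eq_inv_pow_mult [OF delta_balanced] H_def N_def by simp

lemma delta_neq_one:
  assumes "H \<noteq> {\<one>}"
  shows "\<delta> \<noteq> \<one>"
proof
  assume "\<delta> = \<one>"
  then have "Div G M \<delta> \<subseteq> {\<one>}"
    using leL_one_eq_one by (auto simp: mem_Div_iff)
  then have "H \<subseteq> {\<one>}"
    using generate_subgroup_incl [OF _ triv_subgroup] H_def by simp
  then show False
    using assms subgroup.one_closed [OF H_subgroup] by blast
qed

lemma delta_omega_coprime:
  assumes "c \<in> M" "c \<preceq> \<delta>" "c \<preceq> \<omega>"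
  shows "c = \<one>"
proof -
  have "c \<in> N"
    using assms(1,2) Div_delta_in_N by (simp add: mem_Div_iff)
  moreover have "\<delta> \<otimes> c \<preceq> \<Delta>"
    using assms(1,3) leL_mult_left_iff [of \<delta> c \<omega>] delta_mult_omega by simp
  ultimately have "\<delta> \<otimes> c \<in> Div G M \<delta>"
    using Div_delta assms(1) by (simp add: mem_Div_iff)
  then have "\<delta> \<otimes> c \<preceq> \<delta> \<otimes> \<one>"
    by (simp add: mem_Div_iff)
  then have "c \<preceq> \<one>"
    using assms(1) leL_mult_left_iff [of \<delta> c \<one>] by simp
  then show ?thesis
    using assms(1) leL_one_eq_one by simp
qed

lemma leL_delta_if_leL_Div_mult_delta:
  assumes "s \<in> Div G M \<delta>" "t \<in> carrier G" "t \<preceq> s \<otimes> \<delta>" "t \<preceq> \<Delta>"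
  shows "t \<preceq> \<delta>"
proof -
  define s' where "s' = inv \<delta> \<otimes> s \<otimes> \<delta>"
  have s': "s' \<in> Div G M \<delta>"
    unfolding s'_def using assms(1) by (rule Div_conj_inv [OF delta_balanced])
  have "s \<otimes> \<delta> = \<delta> \<otimes> s'"
    using assms(1) by (simp add: s'_def m_assoc)
  then have "inv \<delta> \<otimes> t \<preceq> s'"
    using assms(2,3) s' leL_mult_left_iff [of \<delta> "inv \<delta> \<otimes> t" s'] by simp
  moreover have "inv \<delta> \<otimes> t \<preceq> \<omega>"
    using assms(2,4) leL_mult_left_iff [of \<delta> "inv \<delta> \<otimes> t" \<omega>] delta_mult_omega by simp
  moreover have "meet s' \<omega> = \<one>"
  proof (rule delta_omega_coprime)
    show "meet s' \<omega> \<in> M"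
      using s' by (simp add: meet_in_M mem_Div_iff)
    show "meet s' \<omega> \<preceq> \<delta>"
      using s' meet_leL_left [of s' \<omega>] leL_trans [of "meet s' \<omega>" s' \<delta>] by (simp add: mem_Div_iff)
    show "meet s' \<omega> \<preceq> \<omega>"
      using s' by (simp add: meet_leL_right)
  qed
  ultimately have "inv \<delta> \<otimes> t \<preceq> \<one>"
    using assms(2) s' meet_greatest [of s' \<omega> "inv \<delta> \<otimes> t"] by simp
  then show ?thesis
    using assms(2) leL_mult_left_iff [of \<delta> "inv \<delta> \<otimes> t" \<one>] by simp
qed

lemma meet_Delta_leL_delta:
  assumes "n \<in> N"
  shows "meet n \<Delta> \<preceq> \<delta>"
proof -
  have "n \<in> monoid_gen G (Div G M \<delta>)"
    using assms N_def by simp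
  then show ?thesis
  proof (induct rule: monoid_gen_induct)
    case one
    have "meet \<one> \<Delta> \<preceq> \<one>"
      by (simp add: meet_leL_left)
    then show ?case
      using leL_trans [of "meet \<one> \<Delta>" \<one> \<delta>] by simp
  next
    case (Cons s y)
    define t where "t = meet (s \<otimes> y) \<Delta>"
    have s: "s \<in> M" and y: "y \<in> M"
      using Cons(1,2) N_def by (auto simp: mem_Div_iff)
    have t: "t \<in> carrier G" "t \<preceq> s \<otimes> y" "t \<preceq> \<Delta>"
      using s y by (simp_all add: t_def meet_leL_left meet_leL_right)
    then have "t \<preceq> s \<otimes> \<Delta>"
      using s Delta_leL_mult_Delta leL_trans [of t \<Delta> "s \<otimes> \<Delta>"] by simp
    then have "inv s \<otimes> t \<preceq> y" "inv s \<otimes> t \<preceq> \<Delta>"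
      using s y t leL_mult_left_iff [of s "inv s \<otimes> t"] by auto
    then have "inv s \<otimes> t \<preceq> \<delta>"
      using Cons(3) s y t meet_greatest [of y \<Delta> "inv s \<otimes> t"]
        leL_trans [of "inv s \<otimes> t" "meet y \<Delta>" \<delta>] by simp
    then have "t \<preceq> s \<otimes> \<delta>"
      using s t leL_mult_left_iff [of s "inv s \<otimes> t" \<delta>] by simp
    then show ?case
      using leL_delta_if_leL_Div_mult_delta Cons(1) t unfolding t_def by blast
  qed
qed


lemma Div_delta_left_quotient_in_N:
  assumes "n \<in> N" "u \<in> Div G M \<delta>" "u \<preceq> n"
  shows "inv u \<otimes> n \<in> N"
proof -
  have "n \<in> monoid_gen G (Div G M \<delta>)"
    using assms(1) N_def by simp
  then show ?thesis
    using assms(2,3)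
  proof (induct arbitrary: u rule: monoid_gen_induct)
    case one
    then have "u = \<one>"
      using leL_one_eq_one by (simp add: mem_Div_iff)
    then show ?case
      by simp
  next
    case (Cons s w)
    have s: "s \<in> M" "s \<preceq> \<delta>" and u: "u \<in> M" "u \<preceq> \<delta>" and w: "w \<in> N"
      using Cons N_def by (auto simp: mem_Div_iff)
    define v where "v = join u s"
    have v: "u \<preceq> v" "s \<preceq> v" "v \<preceq> s \<otimes> w"
      using s u w Cons(5) leL_mult_right [of s w]
      by (simp_all add: v_def join_geL_left join_geL_right join_least)
    have "v \<in> M"
      using u s v(1) leL_M_closed [of u v] by (simp add: v_def)
    moreover have "v \<preceq> \<delta>"
      using s u by (simp add: v_def join_least)
    ultimately have vD: "v \<in> Div G M \<delta>"
      by (simp add: mem_Div_iff)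
    have "inv s \<otimes> v \<preceq> w"
      using v(3) s w vD leL_mult_left_iff [of s "inv s \<otimes> v" w] by simp
    then have IH: "inv (inv s \<otimes> v) \<otimes> w \<in> N"
      using Cons(3) Div_left_quotient [OF delta_balanced s(1) vD v(2)] by blast
    have "inv u \<otimes> v \<in> N"
      using Div_left_quotient [OF delta_balanced u(1) vD v(1)] Div_delta_in_N by blast
    moreover have "inv u \<otimes> (s \<otimes> w) = (inv u \<otimes> v) \<otimes> (inv (inv s \<otimes> v) \<otimes> w)"
      using s u w vD by (simp add: m_assoc inv_mult_group)
    ultimately show ?case
      using IH by simp
  qed
qed

lemma meet_Delta_in_Div_delta:
  assumes "n \<in> N" "x \<in> M" "x \<preceq> n"
  shows "meet x \<Delta> \<in> Div G M \<delta>"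
proof -
  have "meet x \<Delta> \<preceq> n"
    using assms meet_leL_left [of x \<Delta>] leL_trans [of "meet x \<Delta>" x n] by simp
  then have "meet x \<Delta> \<preceq> meet n \<Delta>"
    using assms meet_leL_right [of x \<Delta>] by (simp add: meet_greatest)
  then have "meet x \<Delta> \<preceq> \<delta>"
    using assms meet_Delta_leL_delta leL_trans [of "meet x \<Delta>" "meet n \<Delta>" \<delta>] by simp
  then show ?thesis
    using assms(2) by (simp add: mem_Div_iff meet_in_M)
qed

lemma N_divisor_closed:
  assumes "n \<in> N" "x \<in> M" "x \<preceq> n"
  shows "x \<in> N \<and> inv x \<otimes> n \<in> N"
proof -
  have "n \<in> M"
    using assms(1) by simp
  then show ?thesis
    using assms
  proof (induct arbitrary: x rule: left_factor_induct)
    case (step n)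
    show ?case
    proof (cases "x = \<one>")
      case True
      then show ?thesis using step.prems by simp
    next
      case False
      define u where "u = meet x \<Delta>"
      have u: "u \<in> Div G M \<delta>" "u \<noteq> \<one>" "u \<preceq> x"
        using step.prems False meet_Delta_in_Div_delta meet_Delta_neq_one
        by (simp_all add: u_def meet_leL_left)
      then have uM: "u \<in> M" and "u \<preceq> n"
        using step.prems leL_trans [of u x n] by (simp_all add: mem_Div_iff)
      define n' where "n' = inv u \<otimes> n"
      define x' where "x' = inv u \<otimes> x"
      have n': "n' \<in> N" "n = u \<otimes> n'"
        using Div_delta_left_quotient_in_N u(1) \<open>u \<preceq> n\<close> step.prems uM by (simp_all add: n'_def)
      have x': "x' \<in> M" "x = u \<otimes> x'"
        using u step.prems uM by (simp_all add: x'_def leL_quotient_in_M)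
      have "x' \<preceq> n'"
        using step.prems n' x' uM leL_mult_left_iff [of u x' n'] by simp
      then have "x' \<in> N \<and> inv x' \<otimes> n' \<in> N"
        using step.hyps(2) [OF uM u(2) _ n'(2)] n' x' by simp
      moreover have "inv x \<otimes> n = inv x' \<otimes> n'"
        using n' x' uM by (simp add: m_assoc inv_mult_group)
      ultimately show ?thesis
        using x' uM u(1) Div_delta_in_N by simp
    qed
  qed
qed

lemma N_leL_delta_pow:
  assumes "n \<in> N"
  shows "\<exists>k::nat. n \<preceq> \<delta> [^] k"
proof -
  have "n \<in> monoid_gen G (Div G M \<delta>)"
    using assms N_def by simp
  then show ?thesis
  proof (induct rule: monoid_gen_induct)
    case one
    then show ?case
      using leL_refl [of \<one>] by (metis nat_pow_0 one_closed)
  next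
    case (Cons s y)
    then obtain k :: nat where k: "y \<preceq> \<delta> [^] k"
      by blast
    have s: "s \<in> M" and y: "y \<in> M"
      using Cons(1,2) N_def by (auto simp: mem_Div_iff)
    have "inv (\<delta> [^] k) \<otimes> s \<otimes> \<delta> [^] k \<preceq> \<delta>"
      using Div_conj_inv_pow [OF delta_balanced Cons(1)] by (simp add: mem_Div_iff)
    then have "\<delta> [^] k \<otimes> (inv (\<delta> [^] k) \<otimes> s \<otimes> \<delta> [^] k) \<preceq> \<delta> [^] k \<otimes> \<delta>"
      using s leL_mult_left_iff by simp
    then have "s \<otimes> \<delta> [^] k \<preceq> \<delta> [^] Suc k"
      using s by (simp add: m_assoc)
    moreover have "s \<otimes> y \<preceq> s \<otimes> \<delta> [^] k"
      using k s y leL_mult_left_iff by simp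
    ultimately have "s \<otimes> y \<preceq> \<delta> [^] Suc k"
      using s y leL_trans [of "s \<otimes> y" "s \<otimes> \<delta> [^] k"] by simp
    then show ?case
      by blast
  qed
qed

lemma delta_pow_leL_delta_pow_add: "\<delta> [^] (k::nat) \<preceq> \<delta> [^] (k + j)"
  using leL_mult_right [of "\<delta> [^] k" "\<delta> [^] j"] by (simp add: nat_pow_mult)

lemma join_in_N:
  assumes "n \<in> N" "m \<in> N"
  shows "join n m \<in> N"
proof -
  obtain k j :: nat where "n \<preceq> \<delta> [^] k" "m \<preceq> \<delta> [^] j"
    using N_leL_delta_pow assms by blast
  then have "n \<preceq> \<delta> [^] (k + j)" "m \<preceq> \<delta> [^] (k + j)"
    using assms delta_pow_leL_delta_pow_add [of k j] delta_pow_leL_delta_pow_add [of j k]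
      leL_trans [of n "\<delta> [^] k"] leL_trans [of m "\<delta> [^] j"] by (simp_all add: add.commute)
  then have "join n m \<preceq> \<delta> [^] (k + j)"
    using assms join_least by simp
  moreover have "join n m \<in> M"
    using assms join_geL_left [of n m] leL_M_closed [of n "join n m"] by simp
  ultimately show ?thesis
    using N_divisor_closed [OF delta_pow_in_N] by blast
qed


lemma N_reduced_in_N_eq_one:
  assumes "y \<in> N" "N_reduced G M \<delta> y"
  shows "y = \<one>"
proof (rule ccontr)
  assume "y \<noteq> \<one>"
  define u where "u = meet y \<Delta>"
  have u: "u \<in> M" "u \<noteq> \<one>" "u \<preceq> y"
    using assms(1) \<open>y \<noteq> \<one>\<close> meet_Delta_neq_one by (simp_all add: u_def meet_in_M meet_leL_left)
  moreover have "u \<preceq> \<delta>"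
    using meet_Delta_leL_delta [OF assms(1)] by (simp add: u_def)
  ultimately have "u \<preceq> meet y \<delta>"
    using assms(1) meet_greatest by simp
  then have "u \<preceq> \<one>"
    using assms(2) by (simp add: N_reduced_def)
  then show False
    using u leL_one_eq_one by simp
qed

lemma N_leL_mult_N_reduced:
  assumes "N_reduced G M \<delta> x" "m \<in> N" "n \<in> N" "n \<preceq> m \<otimes> x"
  shows "n \<preceq> m"
proof -
  have x: "x \<in> M" "meet x \<delta> = \<one>"
    using assms(1) by (simp_all add: N_reduced_def)
  define v where "v = join n m"
  have v: "v \<in> N" "n \<preceq> v" "m \<preceq> v"
    using assms(2,3) by (simp_all add: v_def join_in_N join_geL_left join_geL_right)
  have "v \<preceq> m \<otimes> x"
    using assms(2-4) x leL_mult_right [of m x] by (simp add: v_def join_least)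
  define y where "y = inv m \<otimes> v"
  have y: "y \<in> N" "v = m \<otimes> y"
    using N_divisor_closed [OF v(1) _ v(3)] assms(2) v(1) by (simp_all add: y_def)
  then have "y \<preceq> x"
    using \<open>v \<preceq> m \<otimes> x\<close> assms(2) x leL_mult_left_iff [of m y x] by simp
  then have "meet y \<delta> \<preceq> meet x \<delta>"
    using x y meet_leL_left [of y \<delta>] meet_leL_right [of y \<delta>] meet_greatest [of x \<delta> "meet y \<delta>"]
      leL_trans [of "meet y \<delta>" y x] by simp
  then have "N_reduced G M \<delta> y"
    using x y leL_one_eq_one meet_in_M by (simp add: N_reduced_def)
  then have "v = m"
    using y N_reduced_in_N_eq_one assms(2) by simp
  then show ?thesis
    using v(2) by simp
qed

text \<open>Conjugation by \<Delta> turns the quotient inv t \<omega> into a right factor x of \<delta> n inv \<delta> \<in> N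
  with x \<delta> \<in> Div \<Delta> \<inter> N = Div \<delta>, which forces x = 1.\<close>

lemma omega_eq_if_leL_N_mult:
  assumes "n \<in> N" "t \<in> M" "t \<preceq> \<omega>" "\<omega> \<preceq> n \<otimes> t"
  shows "t = \<omega>"
proof -
  define r where "r = inv t \<otimes> \<omega>"
  define q where "q = inv \<omega> \<otimes> (n \<otimes> t)"
  define x where "x = \<Delta> \<otimes> r \<otimes> inv \<Delta>"
  have r: "r \<in> M" and q: "q \<in> M"
    using assms by (simp_all add: r_def q_def leL_quotient_in_M)
  have x: "x \<in> M"
    using Delta_conj [OF r] by (simp add: x_def)
  have "\<delta> \<otimes> n \<otimes> inv \<delta> = (\<Delta> \<otimes> q \<otimes> inv \<Delta>) \<otimes> x"
    using assms(1,2) by (simp add: x_def q_def r_def m_assoc inv_mult_group)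
  then have "x \<in> N"
    using N_divisor_closed [OF delta_conj [OF assms(1)], of "\<Delta> \<otimes> q \<otimes> inv \<Delta>"]
      Delta_conj [OF q] x leL_mult_right by simp
  moreover have "\<Delta> \<otimes> inv (x \<otimes> \<delta>) = \<Delta> \<otimes> t \<otimes> inv \<Delta>"
    using assms(2) by (simp add: x_def r_def m_assoc inv_mult_group)
  then have "x \<otimes> \<delta> \<in> Div G M \<Delta>"
    using Delta_conj [OF assms(2)] x by (intro Div_if_right_quotient_in_M [OF Delta_balanced]) simp_all
  ultimately have "x \<otimes> \<delta> \<in> Div G M \<delta>"
    using Div_delta by simp
  then have "\<delta> \<otimes> inv (x \<otimes> \<delta>) \<in> M"
    by (rule Div_right_quotient_in_M [OF delta_balanced])
  then have "inv x \<in> M"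
    using x by (simp add: inv_mult_group m_assoc)
  with x have "x = \<one>"
    by (rule M_inv_in_M_eq_one)
  moreover have "r = inv \<Delta> \<otimes> x \<otimes> \<Delta>"
    using r by (simp add: x_def m_assoc)
  ultimately have "r = \<one>"
    by simp
  moreover have "t \<otimes> r = \<omega>"
    using assms(2) by (simp add: r_def)
  ultimately show ?thesis
    using assms(2) by simp
qed

lemma omega_leL_N_mult_cancel:
  assumes "n \<in> N" "a \<in> M" "\<omega> \<preceq> n \<otimes> a"
  shows "\<omega> \<preceq> a"
proof -
  have "n \<otimes> \<omega> = \<omega> \<otimes> (inv \<Delta> \<otimes> (\<delta> \<otimes> n \<otimes> inv \<delta>) \<otimes> \<Delta>)"
    using assms(1) by (simp add: m_assoc inv_mult_group)
  then have "\<omega> \<preceq> n \<otimes> \<omega>"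
    using leL_mult_right Delta_conj_inv [of "\<delta> \<otimes> n \<otimes> inv \<delta>"] delta_conj [OF assms(1)] by simp
  define t where "t = meet a \<omega>"
  have t: "t \<in> M" "t \<preceq> a" "t \<preceq> \<omega>"
    using assms(2) by (simp_all add: t_def meet_in_M meet_leL_left meet_leL_right)
  have "inv n \<otimes> \<omega> \<preceq> a" "inv n \<otimes> \<omega> \<preceq> \<omega>"
    using assms \<open>\<omega> \<preceq> n \<otimes> \<omega>\<close> leL_mult_left_iff [of n "inv n \<otimes> \<omega>"] by auto
  then have "inv n \<otimes> \<omega> \<preceq> t"
    using assms(1,2) by (simp add: t_def meet_greatest)
  then have "\<omega> \<preceq> n \<otimes> t"
    using assms(1) t leL_mult_left_iff [of n "inv n \<otimes> \<omega>" t] by simp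
  then have "t = \<omega>"
    using omega_eq_if_leL_N_mult assms(1) t by simp
  then show ?thesis
    using t by simp
qed

lemma N_reduced_decomposition:
  assumes "b \<in> M"
  shows "\<exists>n \<in> N. \<exists>a. N_reduced G M \<delta> a \<and> b = n \<otimes> a"
  using assms
proof (induct rule: left_factor_induct)
  case (step b)
  show ?case
  proof (cases "meet b \<delta> = \<one>")
    case True
    then have "N_reduced G M \<delta> b" "b = \<one> \<otimes> b"
      using step.hyps(1) by (simp_all add: N_reduced_def)
    then show ?thesis
      using one_in_N by blast
  next
    case False
    define c where "c = meet b \<delta>"
    define b' where "b' = inv c \<otimes> b"
    have c: "c \<in> M" "c \<noteq> \<one>" "c \<preceq> b" "c \<preceq> \<delta>"
      using False step.hyps(1) by (simp_all add: c_def meet_in_M meet_leL_left meet_leL_right)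
    then have "c \<in> N"
      using Div_delta_in_N by (simp add: mem_Div_iff)
    have b': "b' \<in> M" "b = c \<otimes> b'"
      using c step.hyps(1) by (simp_all add: b'_def leL_quotient_in_M)
    obtain n a where n: "n \<in> N" "N_reduced G M \<delta> a" "b' = n \<otimes> a"
      using step.hyps(2) [OF c(1,2) b'] by blast
    have "b = (c \<otimes> n) \<otimes> a"
      using b'(2) c(1) n by (simp add: N_reduced_def m_assoc)
    then show ?thesis
      using \<open>c \<in> N\<close> n(1,2) N_mult_closed by blast
  qed
qed


lemma H_mult_N_reduced_notin_M_Delta:
  assumes "N_reduced G M \<delta> a" "\<not> \<omega> \<preceq> a" "h \<in> H"
  shows "h \<otimes> a \<otimes> inv \<Delta> \<notin> M"
proof
  assume m: "h \<otimes> a \<otimes> inv \<Delta> \<in> M"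
  have a: "a \<in> M"
    using assms(1) by (simp add: N_reduced_def)
  obtain k :: nat and n where n: "n \<in> N" "h = inv (\<delta> [^] k) \<otimes> n"
    using H_eq_inv_delta_pow_mult assms(3) by blast
  define m' where "m' = inv \<Delta> \<otimes> (h \<otimes> a \<otimes> inv \<Delta>) \<otimes> \<Delta>"
  have m': "m' \<in> M"
    using Delta_conj_inv [OF m] by (simp add: m'_def)
  have na: "n \<otimes> a = \<delta> [^] Suc k \<otimes> (\<omega> \<otimes> m')"
    using n a by (simp add: m'_def m_assoc)
  then have "\<delta> [^] Suc k \<preceq> n \<otimes> a"
    using m' leL_mult_right [of "\<delta> [^] Suc k" "\<omega> \<otimes> m'"] by simp
  then have "\<delta> [^] Suc k \<preceq> n"
    by (rule N_leL_mult_N_reduced [OF assms(1) n(1) delta_pow_in_N])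
  then have n': "inv (\<delta> [^] Suc k) \<otimes> n \<in> N"
    using N_divisor_closed [OF n(1)] by simp
  have "(inv (\<delta> [^] Suc k) \<otimes> n) \<otimes> a = inv (\<delta> [^] Suc k) \<otimes> (\<delta> [^] Suc k \<otimes> (\<omega> \<otimes> m'))"
    using na n a by (simp add: m_assoc del: nat_pow_Suc)
  also have "\<dots> = \<omega> \<otimes> m'"
    using m' by (simp del: nat_pow_Suc)
  finally have "\<omega> \<preceq> (inv (\<delta> [^] Suc k) \<otimes> n) \<otimes> a"
    using m' leL_mult_right [of \<omega> m'] by simp
  then show False
    using omega_leL_N_mult_cancel [OF n' a] assms(2) by simp
qed

lemma N_reduced_H_translate_eq:
  assumes "N_reduced G M \<delta> a1" "N_reduced G M \<delta> a2" "h \<in> H" "a2 = h \<otimes> a1"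
  shows "a1 = a2"
proof -
  have a: "a1 \<in> M" "a2 \<in> M"
    using assms(1,2) by (simp_all add: N_reduced_def)
  obtain k :: nat and n where n: "n \<in> N" "h = inv (\<delta> [^] k) \<otimes> n"
    using H_eq_inv_delta_pow_mult assms(3) by blast
  have "\<delta> [^] k \<otimes> a2 = n \<otimes> a1"
    using assms(4) n a by (simp add: m_assoc)
  then have "\<delta> [^] k \<preceq> n \<otimes> a1"
    using a leL_mult_right [of "\<delta> [^] k" a2] by simp
  then have "\<delta> [^] k \<preceq> n"
    using N_leL_mult_N_reduced [OF assms(1) n(1) delta_pow_in_N] by simp
  then have n': "inv (\<delta> [^] k) \<otimes> n \<in> N"
    using N_divisor_closed [OF n(1)] by simp
  have "inv (\<delta> [^] k) \<otimes> n \<preceq> \<one> \<otimes> a2"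
    using assms(4) n n' a leL_mult_right [of "inv (\<delta> [^] k) \<otimes> n" a1] by simp
  then have "inv (\<delta> [^] k) \<otimes> n \<preceq> \<one>"
    using N_leL_mult_N_reduced [OF assms(2) one_in_N n'] by simp
  then have "h = \<one>"
    using n n' leL_one_eq_one by simp
  then show ?thesis
    using assms(4) a by simp
qed

definition reduced_form :: "'a \<Rightarrow> int \<Rightarrow> bool"
  where "reduced_form a p \<longleftrightarrow>
    unmovable G M \<Delta> a \<and> N_reduced G M \<delta> a \<and> (p = 0 \<or> p < 0 \<and> \<not> \<omega> \<preceq> a)"

lemma HN_reduced_iff_reduced_form:
  "HN_reduced G M \<Delta> \<delta> \<beta> \<longleftrightarrow> (\<exists>a p. \<beta> = a \<otimes> \<Delta> [^] p \<and> reduced_form a p)"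
  unfolding HN_reduced_def reduced_form_def by blast

lemma Delta_int_pow_in_M: "0 \<le> p \<Longrightarrow> \<Delta> [^] (p::int) \<in> M"
  using Delta_pow_in_M [of "nat p"] by (simp add: pow_nat)

lemma reduced_form_H_translate_eq:
  assumes "reduced_form a1 p1" "reduced_form a2 p2" "h \<in> H"
    and "a2 \<otimes> \<Delta> [^] p2 = h \<otimes> (a1 \<otimes> \<Delta> [^] p1)" "p1 \<le> p2"
  shows "a1 \<otimes> \<Delta> [^] p1 = a2 \<otimes> \<Delta> [^] p2"
proof (cases "p1 = p2")
  case True
  have a: "a1 \<in> M" "a2 \<in> M"
    using assms(1,2) by (simp_all add: reduced_form_def N_reduced_def)
  have "a2 = h \<otimes> a1"
    using assms(3,4) a True by (simp add: m_assoc [symmetric])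
  with assms(1-3) have "a1 = a2"
    by (intro N_reduced_H_translate_eq [of a1 a2 h]) (simp_all add: reduced_form_def)
  then show ?thesis
    using True by simp
next
  case False
  have a: "a1 \<in> M" "a2 \<in> M"
    using assms(1,2) by (simp_all add: reduced_form_def N_reduced_def)
  have "\<not> \<omega> \<preceq> a1"
    using assms(1,2,5) False by (auto simp: reduced_form_def)
  have "h \<otimes> a1 \<otimes> inv \<Delta> = (h \<otimes> (a1 \<otimes> \<Delta> [^] p1)) \<otimes> \<Delta> [^] (- p1 - 1)"
    using assms(3) a by (simp add: m_assoc int_pow_mult [symmetric] int_pow_neg)
  also have "\<dots> = a2 \<otimes> \<Delta> [^] p2 \<otimes> \<Delta> [^] (- p1 - 1)"
    using assms(4) by simp
  also have "\<dots> = a2 \<otimes> \<Delta> [^] (p2 + (- p1 - 1))"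
    using a by (simp add: m_assoc int_pow_mult)
  finally have "h \<otimes> a1 \<otimes> inv \<Delta> \<in> M"
    using a assms(5) False Delta_int_pow_in_M [of "p2 + (- p1 - 1)"] by simp
  then show ?thesis
    using H_mult_N_reduced_notin_M_Delta assms(1,3) \<open>\<not> \<omega> \<preceq> a1\<close> by (simp add: reduced_form_def)
qed


lemma N_reduced_unmovable:
  assumes "\<delta> \<noteq> \<one>" "N_reduced G M \<delta> a"
  shows "unmovable G M \<Delta> a"
proof -
  have a: "a \<in> M" "meet a \<delta> = \<one>"
    using assms(2) by (simp_all add: N_reduced_def)
  have "\<not> \<Delta> \<preceq> a"
  proof
    assume "\<Delta> \<preceq> a"
    then have "\<delta> \<preceq> meet a \<delta>"
      using a delta_leL_Delta leL_trans [of \<delta> \<Delta> a] meet_greatest [of a \<delta> \<delta>] by simp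
    then show False
      using a assms(1) leL_one_eq_one by simp
  qed
  then show ?thesis
    using a by (simp add: unmovable_def)
qed

lemma delta_mult_in_M_if_omega_leL:
  assumes "\<beta> \<in> carrier G" "\<omega> \<preceq> \<beta> \<otimes> \<Delta>"
  shows "\<delta> \<otimes> \<beta> \<in> M"
proof -
  have "\<delta> \<otimes> \<beta> = \<Delta> \<otimes> (inv \<omega> \<otimes> (\<beta> \<otimes> \<Delta>)) \<otimes> inv \<Delta>"
    using assms(1) by (simp add: m_assoc inv_mult_group)
  then show ?thesis
    using Delta_conj [OF leL_quotient_in_M [OF assms(2)]] by simp
qed

lemma exists_H_mult_Delta_pow_in_M:
  assumes "\<alpha> \<in> carrier G"
  shows "\<exists>j::nat. \<exists>h \<in> H. h \<otimes> \<alpha> \<otimes> \<Delta> [^] j \<in> M"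
proof -
  obtain k :: nat and m where "m \<in> M" "\<alpha> = inv (\<Delta> [^] k) \<otimes> m"
    using carrier_eq_inv_Delta_pow_mult assms by blast
  then have "\<one> \<otimes> \<alpha> \<otimes> \<Delta> [^] k \<in> M"
    using Delta_pow_conj_inv by simp
  then show ?thesis
    using subgroup.one_closed [OF H_subgroup] by blast
qed

lemma exists_reduced_form_in_coset:
  assumes "\<delta> \<noteq> \<one>" "\<alpha> \<in> carrier G"
  shows "\<exists>h \<in> H. \<exists>a p. reduced_form a p \<and> h \<otimes> \<alpha> = a \<otimes> \<Delta> [^] p"
proof -
  define J where "J = (LEAST j::nat. \<exists>h \<in> H. h \<otimes> \<alpha> \<otimes> \<Delta> [^] j \<in> M)"
  obtain h where h: "h \<in> H" "h \<otimes> \<alpha> \<otimes> \<Delta> [^] J \<in> M"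
    using LeastI_ex [OF exists_H_mult_Delta_pow_in_M [OF assms(2)]] unfolding J_def by blast
  have J_least: "h' \<otimes> \<alpha> \<otimes> \<Delta> [^] j \<notin> M" if "j < J" "h' \<in> H" for j h'
    using not_less_Least [of j "\<lambda>j::nat. \<exists>h \<in> H. h \<otimes> \<alpha> \<otimes> \<Delta> [^] j \<in> M"] that by (auto simp: J_def)
  obtain n a where n: "n \<in> N" "N_reduced G M \<delta> a" "h \<otimes> \<alpha> \<otimes> \<Delta> [^] J = n \<otimes> a"
    using N_reduced_decomposition [OF h(2)] by blast
  define g where "g = inv n \<otimes> h"
  have g: "g \<in> H" "g \<otimes> \<alpha> \<otimes> \<Delta> [^] J = a"
    using n h assms(2) N_subset_H subgroup.m_closed [OF H_subgroup] subgroup.m_inv_closed [OF H_subgroup]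
    by (auto simp: g_def m_assoc N_reduced_def)
  have "\<not> \<omega> \<preceq> a" if "J = Suc j" for j
  proof
    assume "\<omega> \<preceq> a"
    then have "\<delta> \<otimes> (g \<otimes> \<alpha> \<otimes> \<Delta> [^] j) \<in> M"
      using delta_mult_in_M_if_omega_leL [of "g \<otimes> \<alpha> \<otimes> \<Delta> [^] j"] g that assms(2) by (simp add: m_assoc)
    moreover have "\<delta> \<otimes> g \<in> H"
      using g(1) delta_in_N N_subset_H subgroup.m_closed [OF H_subgroup] by blast
    ultimately show False
      using J_least [of j "\<delta> \<otimes> g"] that g(1) assms(2) by (simp add: m_assoc)
  qed
  then have "reduced_form a (- int J)"
    using N_reduced_unmovable [OF assms(1) n(2)] n(2) by (cases J) (simp_all add: reduced_form_def)
  moreover have "g \<otimes> \<alpha> = a \<otimes> \<Delta> [^] (- int J)"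
    using g(2) [symmetric] g(1) assms(2) by (simp add: int_pow_neg_int m_assoc)
  ultimately show ?thesis
    using g(1) by blast
qed

lemma HN_reduced_in_coset_unique:
  assumes "\<alpha> \<in> carrier G" "t1 \<in> H #> \<alpha>" "t2 \<in> H #> \<alpha>"
    and "HN_reduced G M \<Delta> \<delta> t1" "HN_reduced G M \<Delta> \<delta> t2"
  shows "t1 = t2"
proof -
  obtain h1 h2 where h: "h1 \<in> H" "t1 = h1 \<otimes> \<alpha>" "h2 \<in> H" "t2 = h2 \<otimes> \<alpha>"
    using assms(2,3) by (auto simp: r_coset_def)
  obtain a1 p1 a2 p2 where r: "t1 = a1 \<otimes> \<Delta> [^] p1" "reduced_form a1 p1"
    "t2 = a2 \<otimes> \<Delta> [^] p2" "reduced_form a2 p2"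
    using assms(4,5) HN_reduced_iff_reduced_form by meson
  have H: "h2 \<otimes> inv h1 \<in> H" "h1 \<otimes> inv h2 \<in> H"
    using h subgroup.m_closed [OF H_subgroup] subgroup.m_inv_closed [OF H_subgroup] by auto
  have "t2 = (h2 \<otimes> inv h1) \<otimes> t1" "t1 = (h1 \<otimes> inv h2) \<otimes> t2"
    using h assms(1) by (simp_all add: m_assoc)
  note t = this [unfolded r(1,3)]
  show ?thesis
  proof (cases "p1 \<le> p2")
    case True
    then show ?thesis
      using reduced_form_H_translate_eq [OF r(2,4) H(1) t(1)] r(1,3) by simp
  next
    case False
    then show ?thesis
      using reduced_form_H_translate_eq [OF r(4,2) H(2) t(2)] r(1,3) by simp
  qed
qed

theorem HN_reduced_right_transversal:
  assumes "H \<noteq> {\<one>}" "\<alpha> \<in> carrier G"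
  shows "\<exists>!t. t \<in> (H #> \<alpha>) \<inter> {\<beta> \<in> carrier G. HN_reduced G M \<Delta> \<delta> \<beta>}"
proof -
  obtain h a p where "h \<in> H" "reduced_form a p" "h \<otimes> \<alpha> = a \<otimes> \<Delta> [^] p"
    using exists_reduced_form_in_coset [OF delta_neq_one [OF assms(1)] assms(2)] by blast
  then have "h \<otimes> \<alpha> \<in> H #> \<alpha>" "HN_reduced G M \<Delta> \<delta> (h \<otimes> \<alpha>)"
    unfolding r_coset_def HN_reduced_iff_reduced_form by blast+
  then have "h \<otimes> \<alpha> \<in> (H #> \<alpha>) \<inter> {\<beta> \<in> carrier G. HN_reduced G M \<Delta> \<delta> \<beta>}"
    using \<open>h \<in> H\<close> assms(2) by simp
  then show ?thesis
    using HN_reduced_in_coset_unique [OF assms(2)] by blast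
qed

end

theorem theorem3p3:
  fixes G :: "('a, 'b) monoid_scheme"
  assumes "garside_structure G M \<Delta>"
    and "parabolic_substructure G M \<Delta> H N \<delta>"
    and "H \<noteq> {\<one>\<^bsub>G\<^esub>}"
    and "T = {\<alpha> \<in> carrier G. HN_reduced G M \<Delta> \<delta> \<alpha>}"
  shows "\<forall>\<alpha>\<in>carrier G. \<exists>!t. t \<in> (H #>\<^bsub>G\<^esub> \<alpha>) \<inter> T"
proof -
  interpret parabolic G M \<Delta> H N \<delta>
    using assms(1,2)
    unfolding garside_structure_def parabolic_substructure_def parabolic_def parabolic_axioms_def
      garside_def garside_axioms_def positive_submonoid_def positive_submonoid_axioms_def
    by blast
  show ?thesis
    using HN_reduced_right_transversal [OF assms(3)] assms(4) by blast
qed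

end
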